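(* Consider the $r$-cGA without borders on a function $f\in\{r\text{-OneMax},\,G\text{-OneMax}\}$, and let $(\mathcal F_t)$ be the natural filtration of the process. (1) For any $i\in\{1,\dots,n\}$, let $X_t=p^{(t)}_{i,r-1}$ and $\varepsilon_i=\mathbb E[X_{t+1}-X_t\mid\mathcal F_t]$. Then the random variable $X_{t+1}-X_t-\varepsilon_i$ is $\left(4X_t(1-X_t)/K^2+2\varepsilon_i/K,\;K\right)$-sub-Gaussian. (2) Let $\varphi_t=\sum_{i=1}^n(1-p^{(t)}_{i,r-1})$ and let $\varepsilon_t=\mathbb E[\varphi_t-\varphi_{t+1}\mid\mathcal F_t]$, and suppose $\varepsilon_t\ge\sqrt{\varphi_t}/(30K)$. Then the random variable $\varphi_t-\varphi_{t+1}-\varepsilon_t$ is $(8\varphi_t/K^2,\;K)$-sub-Gaussian.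
   Context: Let $n\ge1$, $r\ge2$, $K>0$. $r$-OneMax$(x)=\sum_i\mathbf 1[x_i=r-1]$ and \textit{G}-OneMax$(x)=\sum_i x_i$ on $\{0,\dots,r-1\}^n$. The $r$-cGA without borders with parameter $K$ maintains frequencies $p^{(t)}_{i,j}$, initially $1/r$; each iteration samples two strings $x,y$ independently (position $i$ takes value $j$ with probability $p^{(t)}_{i,j}$, independently), swaps them if $f(x)<f(y)$, and sets $p^{(t+1)}_{i,j}=p^{(t)}_{i,j}+\frac1K(\mathbf 1[x_i=j]-\mathbf 1[y_i=j])$. A random variable $Y$ is called $(c,\delta)$-sub-Gaussian if $\mathbb E[e^{\lambda Y}]\le e^{\lambda^2 c/2}$ for all $0\le\lambda\le\delta$ (conditionally on $\mathcal F_t$). *)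

theory Defs
  imports "HOL-Probability.Probability"
begin

text \<open>Positions are indexed 0..n-1 and values 0..r-1. A frequency state is
  p :: nat => nat => real, p i j = frequency of value j at position i.
  A search point is x :: nat => nat (only positions < n matter).\<close>

definition rOneMax :: "nat \<Rightarrow> nat \<Rightarrow> (nat \<Rightarrow> nat) \<Rightarrow> real" where
  "rOneMax r n x = real (card {i. i < n \<and> x i = r - 1})"

definition GOneMax :: "nat \<Rightarrow> (nat \<Rightarrow> nat) \<Rightarrow> real" where
  "GOneMax n x = (\<Sum>i<n. real (x i))"

definition valid_freq :: "nat \<Rightarrow> nat \<Rightarrow> (nat \<Rightarrow> nat \<Rightarrow> real) \<Rightarrow> bool" where
  "valid_freq n r p \<longleftrightarrow> (\<forall>i<n. (\<forall>j<r. 0 \<le> p i j) \<and> (\<Sum>j<r. p i j) = 1)"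

definition sample :: "nat \<Rightarrow> nat \<Rightarrow> (nat \<Rightarrow> nat \<Rightarrow> real) \<Rightarrow> (nat \<Rightarrow> nat) pmf" where
  "sample n r p = Pi_pmf {..<n} 0 (\<lambda>i. embed_pmf (\<lambda>j. if j < r then p i j else 0))"

definition cga_update :: "real \<Rightarrow> (nat \<Rightarrow> nat \<Rightarrow> real) \<Rightarrow> (nat \<Rightarrow> nat) \<Rightarrow> (nat \<Rightarrow> nat) \<Rightarrow> (nat \<Rightarrow> nat \<Rightarrow> real)" where
  "cga_update K p x y = (\<lambda>i j. p i j + (1 / K) * ((if x i = j then 1 else 0) - (if y i = j then 1 else 0)))"

text \<open>One iteration of the r-cGA without borders: the law of p^(t+1) given p^(t) = p.\<close>
definition cga_step :: "nat \<Rightarrow> nat \<Rightarrow> real \<Rightarrow> ((nat \<Rightarrow> nat) \<Rightarrow> real) \<Rightarrow> (nat \<Rightarrow> nat \<Rightarrow> real) \<Rightarrow> (nat \<Rightarrow> nat \<Rightarrow> real) pmf" where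
  "cga_step n r K f p =
     bind_pmf (sample n r p) (\<lambda>x. bind_pmf (sample n r p) (\<lambda>y.
       return_pmf (if f x < f y then cga_update K p y x else cga_update K p x y)))"

inductive cga_reachable :: "nat \<Rightarrow> nat \<Rightarrow> real \<Rightarrow> ((nat \<Rightarrow> nat) \<Rightarrow> real) \<Rightarrow> (nat \<Rightarrow> nat \<Rightarrow> real) \<Rightarrow> bool"
  for n r K f where
  init: "cga_reachable n r K f (\<lambda>i j. 1 / real r)"
| step: "cga_reachable n r K f p \<Longrightarrow> valid_freq n r p \<Longrightarrow> q \<in> set_pmf (cga_step n r K f p)
          \<Longrightarrow> cga_reachable n r K f q"

definition sub_gaussian :: "'a pmf \<Rightarrow> ('a \<Rightarrow> real) \<Rightarrow> real \<Rightarrow> real \<Rightarrow> bool" where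
  "sub_gaussian M Y c \<delta> \<longleftrightarrow>
     (\<forall>l. 0 \<le> l \<and> l \<le> \<delta> \<longrightarrow>
        measure_pmf.expectation M (\<lambda>w. exp (l * Y w)) \<le> exp (l^2 * c / 2))"

end

theory Submission
  imports Defs
begin

(*
  One step of the cGA is the image of a pair (x, y) of independent samples under the update
  with winner and loser.  At position i, K times the increment of the top frequency is a
  difference of two indicators, so it lies in {-1, 0, 1}.  Its mean is nonnegative:
  exchanging the i-th entries of x and y preserves the law of the pair, and moving the top
  value to the other sample only raises that sample's fitness, so if the top value loses in
  one configuration it wins in the exchanged one.
  For such a variable D, exp (s D) <= 1 + s D + D^2 (e^s - 1 - s), and E D^2 = 2 X (1 - X)
  gives (1).

  K times the decrease of the potential is +-(C y - C x) with C = r-OneMax.  The sum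
  exp (s Y) + exp (-s Y) does not see the sign, so its mean factorises into the moment
  generating functions of C and -C, and position k contributes
  (X e^s + 1 - X) (X e^-s + 1 - X) <= exp (2 s^2 (1 - X)) with X = p k (r - 1).  This
  gives (2); of the drift hypothesis only its consequence 0 <= epsilon is needed.
*)

section \<open>Exponential inequalities\<close>

lemma exp_neg_le_quadratic:
  fixes s :: real
  assumes "0 \<le> s"
  shows "exp (-s) \<le> 1 - s + s^2"
proof -
  have "1 \<le> 1 + s^2/2 * (1 + s + s^2)"
    using assms by simp
  also have "\<dots> = (1 - s + s^2) * (1 + s + s^2/2)"
    by (simp add: field_simps power2_eq_square)
  also have "\<dots> \<le> (1 - s + s^2) * exp s"
  proof (rule mult_left_mono)
    show "1 + s + s^2/2 \<le> exp s"
      using exp_lower_Taylor_quadratic[OF assms] .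
    have "0 \<le> (s - 1/2)^2 + 3/4" by simp
    then show "0 \<le> 1 - s + s^2" by (simp add: power2_eq_square algebra_simps)
  qed
  finally show ?thesis
    by (simp add: exp_minus field_simps)
qed

lemma exp_plus_exp_neg_le:
  fixes s :: real
  assumes "0 \<le> s" "s \<le> 1"
  shows "exp s + exp (-s) - 2 \<le> 2 * s^2"
  using exp_bound[OF assms] exp_neg_le_quadratic[OF assms(1)] by simp

lemma exp_neg_mult_one_plus_le_one:
  fixes x :: real
  shows "exp (-x) * (1 + x) \<le> 1"
proof -
  have "exp (-x) * (1 + x) \<le> exp (-x) * exp x"
    by (intro mult_left_mono exp_ge_add_one_self) simp
  then show ?thesis
    using exp_minus_inverse[of x] by (simp add: mult.commute)
qed

lemma exp_mult_le_of_trinary: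
  fixes s d :: real
  assumes "d \<in> {-1, 0, 1}" "0 \<le> s"
  shows "exp (s * d) \<le> 1 + s * d + d^2 * (exp s - 1 - s)"
proof -
  have "exp (-s) \<le> exp s - 2 * s"
    using real_le_x_sinh[OF assms(2)] by (simp add: exp_minus)
  then show ?thesis using assms(1) by auto
qed

lemma exp_neg_mult_le_exp_double:
  fixes x m u :: real
  assumes "0 \<le> x" "0 \<le> u" "m \<le> exp u"
  shows "exp (-x) * (x + 2 * m - 1) \<le> exp (2 * u)"
proof -
  have "exp (-x) * (2 * m - 2) \<le> 2 * exp u - 2"
  proof (cases "m \<le> 1")
    case True
    then have "exp (-x) * (2 * m - 2) \<le> 0"
      by (simp add: mult_nonneg_nonpos)
    also have "0 \<le> 2 * exp u - 2"
      using assms(2) by simp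
    finally show ?thesis .
  next
    case False
    then have "exp (-x) * (2 * m - 2) \<le> 2 * m - 2"
      using assms(1) by (intro mult_left_le_one_le) auto
    also have "\<dots> \<le> 2 * exp u - 2"
      using assms(3) by simp
    finally show ?thesis .
  qed
  then have "exp (-x) * (x + 2 * m - 1) \<le> 1 + (2 * exp u - 2)"
    using exp_neg_mult_one_plus_le_one[of x] by (simp add: algebra_simps)
  also have "\<dots> \<le> exp (2 * u)"
    using zero_le_power2[of "exp u - 1"] unfolding exp_double by (simp add: power2_eq_square algebra_simps)
  finally show ?thesis .
qed

lemma bernoulli_mgf_product_le:
  fixes X s :: real
  assumes "0 \<le> X" "X \<le> 1" "0 \<le> s" "s \<le> 1"
  shows "(X * exp s + (1 - X)) * (X * exp (-s) + (1 - X)) \<le> exp (2 * s^2 * (1 - X))"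
proof -
  have "(X * exp s + (1 - X)) * (X * exp (-s) + (1 - X)) = 1 + (1 - X) * (X * (exp s + exp (-s) - 2))"
    by (simp add: exp_minus field_simps)
  also have "\<dots> \<le> 1 + (1 - X) * (2 * s^2)"
  proof -
    have "0 \<le> exp s + exp (-s) - 2"
      using exp_ge_add_one_self[of s] exp_ge_add_one_self[of "-s"] by linarith
    then have "X * (exp s + exp (-s) - 2) \<le> exp s + exp (-s) - 2"
      using assms(1,2) by (rule mult_left_le_one_le)
    also have "\<dots> \<le> 2 * s^2"
      using assms(3,4) by (rule exp_plus_exp_neg_le)
    finally show ?thesis
      using assms(2) by (simp add: mult_left_mono)
  qed
  also have "\<dots> \<le> exp (2 * s^2 * (1 - X))"
    using exp_ge_add_one_self[of "2 * s^2 * (1 - X)"] by (simp add: ac_simps)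
  finally show ?thesis .
qed

section \<open>Products of probability mass functions\<close>

lemma expectation_pair_pmf_mult:
  fixes u :: "'a \<Rightarrow> real" and v :: "'b \<Rightarrow> real"
  assumes "finite (set_pmf p)" "finite (set_pmf q)"
  shows "measure_pmf.expectation (pair_pmf p q) (\<lambda>z. u (fst z) * v (snd z))
           = measure_pmf.expectation p u * measure_pmf.expectation q v"
proof -
  have "measure_pmf.expectation (pair_pmf p q) (\<lambda>z. u (fst z) * v (snd z))
      = (\<Sum>z\<in>set_pmf p \<times> set_pmf q. u (fst z) * v (snd z) * pmf (pair_pmf p q) z)"
    by (rule integral_measure_pmf_real) (use assms in auto)
  also have "\<dots> = (\<Sum>x\<in>set_pmf p. u x * pmf p x) * (\<Sum>y\<in>set_pmf q. v y * pmf q y)"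
    by (simp add: sum_product sum.cartesian_product case_prod_unfold algebra_simps flip: pmf_pair)
  also have "\<dots> = measure_pmf.expectation p u * measure_pmf.expectation q v"
    using assms by (simp add: integral_measure_pmf_real)
  finally show ?thesis .
qed

lemma pmf_Pi_pmf_eq_mult_remove:
  assumes "finite A" "i \<in> A"
  shows "pmf (Pi_pmf A d P) f = pmf (P i) (f i) * pmf (Pi_pmf (A - {i}) d P) (f(i := d))"
proof -
  have "(\<Prod>a\<in>A - {i}. pmf (P a) ((f(i := d)) a)) = (\<Prod>a\<in>A - {i}. pmf (P a) (f a))"
    by (intro prod.cong) auto
  then show ?thesis
    using assms by (auto simp: pmf_Pi prod.remove)
qed

lemma map_pmf_swap_coordinate_pair_Pi_pmf:
  fixes d :: 'b and P :: "'a \<Rightarrow> 'b pmf"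
  assumes "finite A" "i \<in> A"
  defines "M \<equiv> pair_pmf (Pi_pmf A d P) (Pi_pmf A d P)"
  shows "map_pmf (\<lambda>(x, y). (x(i := y i), y(i := x i))) M = M"
proof (rule pmf_eqI)
  fix z :: "('a \<Rightarrow> 'b) \<times> ('a \<Rightarrow> 'b)"
  define sw where "sw = (\<lambda>(x, y). (x(i := y i), y(i := x i) :: 'a \<Rightarrow> 'b))"
  have sw_sw: "sw (sw z) = z" for z
    by (auto simp: sw_def split: prod.splits)
  then have "inj sw"
    by (metis injI)
  then have "pmf (map_pmf sw M) z = pmf M (sw z)"
    using pmf_map_inj'[of sw M "sw z"] sw_sw by simp
  also have "\<dots> = pmf M z"
    using assms(1,2) by (auto simp: M_def sw_def pmf_pair pmf_Pi_pmf_eq_mult_remove[where i = i] split: prod.splits)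
  finally show "pmf (map_pmf (\<lambda>(x, y). (x(i := y i), y(i := x i))) M) z = pmf M z"
    by (simp add: sw_def)
qed

section \<open>Sub-Gaussian centred increments\<close>

lemma sub_gaussian_centered_trinary:
  fixes M :: "'a pmf" and Y :: "'a \<Rightarrow> real"
  assumes fin: "finite (set_pmf M)"
    and trinary: "\<And>w. w \<in> set_pmf M \<Longrightarrow> Y w \<in> {-1, 0, 1}"
    and drift: "0 \<le> measure_pmf.expectation M Y"
  shows "sub_gaussian M (\<lambda>w. Y w - measure_pmf.expectation M Y)
           (2 * (measure_pmf.expectation M (\<lambda>w. (Y w)^2) + measure_pmf.expectation M Y)) 1"
  unfolding sub_gaussian_def
proof (intro allI impI, elim conjE)
  fix s :: real
  assume s0: "0 \<le> s" and s1: "s \<le> 1"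
  define \<mu> where "\<mu> = measure_pmf.expectation M Y"
  define v where "v = measure_pmf.expectation M (\<lambda>w. (Y w)^2)"
  define b where "b = exp s - 1 - s"
  have int [simp]: "integrable (measure_pmf M) h" for h :: "'a \<Rightarrow> real"
    using fin by (rule integrable_measure_pmf_finite)
  have b: "0 \<le> b" "b \<le> s^2"
    using exp_ge_add_one_self[of s] exp_bound[OF s0 s1] unfolding b_def by linarith+
  have v0: "0 \<le> v"
    unfolding v_def by simp
  have damp: "exp (-(s * \<mu>)) \<le> 1"
    using s0 drift by (simp add: \<mu>_def)
  have "(\<lambda>w. exp (s * (Y w - \<mu>))) = (\<lambda>w. exp (-(s * \<mu>)) * exp (s * Y w))"
    by (simp add: fun_eq_iff exp_add[symmetric] algebra_simps)
  then have "measure_pmf.expectation M (\<lambda>w. exp (s * (Y w - \<mu>)))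
      = exp (-(s * \<mu>)) * measure_pmf.expectation M (\<lambda>w. exp (s * Y w))"
    by simp
  also have "\<dots> \<le> exp (-(s * \<mu>)) * measure_pmf.expectation M (\<lambda>w. 1 + s * Y w + (Y w)^2 * b)"
    unfolding b_def
    by (intro mult_left_mono integral_mono_AE AE_pmfI exp_mult_le_of_trinary trinary s0) simp_all
  also have "\<dots> = exp (-(s * \<mu>)) * (1 + s * \<mu>) + exp (-(s * \<mu>)) * (v * b)"
    by (simp add: \<mu>_def v_def algebra_simps)
  also have "\<dots> \<le> 1 + v * s^2"
  proof (rule add_mono)
    show "exp (-(s * \<mu>)) * (1 + s * \<mu>) \<le> 1"
      by (rule exp_neg_mult_one_plus_le_one)
    have "exp (-(s * \<mu>)) * (v * b) \<le> v * b"
      using damp v0 b by (intro mult_left_le_one_le) auto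
    also have "\<dots> \<le> v * s^2"
      using v0 b by (intro mult_left_mono) auto
    finally show "exp (-(s * \<mu>)) * (v * b) \<le> v * s^2" .
  qed
  also have "\<dots> \<le> exp (v * s^2)"
    by (rule exp_ge_add_one_self)
  also have "\<dots> \<le> exp (s^2 * (2 * (v + \<mu>)) / 2)"
    using drift unfolding \<mu>_def[symmetric] by (simp add: algebra_simps)
  finally show "measure_pmf.expectation M (\<lambda>w. exp (s * (Y w - \<mu>))) \<le> exp (s^2 * (2 * (v + \<mu>)) / 2)" .
qed

lemma sub_gaussian_centered_signed_difference:
  fixes P :: "'a pmf" and C :: "'a \<Rightarrow> real" and Y :: "'a \<times> 'a \<Rightarrow> real"
  assumes fin: "finite (set_pmf P)"
    and signed: "\<And>x y. Y (x, y) = C y - C x \<or> Y (x, y) = C x - C y"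
    and drift: "0 \<le> measure_pmf.expectation (pair_pmf P P) Y"
    and c: "0 \<le> c"
    and mgf: "\<And>s. 0 \<le> s \<Longrightarrow> s \<le> \<delta> \<Longrightarrow>
      measure_pmf.expectation P (\<lambda>x. exp (s * C x)) * measure_pmf.expectation P (\<lambda>x. exp (- s * C x))
        \<le> exp (s^2 * c / 2)"
  shows "sub_gaussian (pair_pmf P P) (\<lambda>z. Y z - measure_pmf.expectation (pair_pmf P P) Y) (2 * c) \<delta>"
  unfolding sub_gaussian_def
proof (intro allI impI, elim conjE)
  fix s :: real
  assume s0: "0 \<le> s" and s\<delta>: "s \<le> \<delta>"
  define M where "M = pair_pmf P P"
  define \<mu> where "\<mu> = measure_pmf.expectation M Y"
  define m where "m = measure_pmf.expectation P (\<lambda>x. exp (s * C x)) * measure_pmf.expectation P (\<lambda>x. exp (- s * C x))"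
  define u where "u = s^2 * c / 2"
  have int [simp]: "integrable (measure_pmf M) h" for h :: "'a \<times> 'a \<Rightarrow> real"
    using fin by (intro integrable_measure_pmf_finite) (simp add: M_def)
  have \<mu>0: "0 \<le> \<mu>"
    using drift by (simp add: \<mu>_def M_def)
  have m: "m \<le> exp u"
    unfolding m_def u_def by (rule mgf[OF s0 s\<delta>])
  have u0: "0 \<le> u"
    using c by (simp add: u_def)
  have cosh_Y: "exp (s * Y z) + exp (- (s * Y z))
      = exp (s * C (fst z)) * exp (- s * C (snd z)) + exp (- s * C (fst z)) * exp (s * C (snd z))" for z
  proof -
    consider "Y z = C (snd z) - C (fst z)" | "Y z = C (fst z) - C (snd z)"
      using signed[of "fst z" "snd z"] by auto
    then show ?thesis
      by cases (simp_all add: exp_add[symmetric] right_diff_distrib add.commute)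
  qed
  have "(\<lambda>z. exp (s * (Y z - \<mu>))) = (\<lambda>z. exp (-(s * \<mu>)) * exp (s * Y z))"
    by (simp add: fun_eq_iff exp_add[symmetric] algebra_simps)
  then have "measure_pmf.expectation M (\<lambda>z. exp (s * (Y z - \<mu>)))
      = exp (-(s * \<mu>)) * measure_pmf.expectation M (\<lambda>z. exp (s * Y z))"
    by simp
  also have "\<dots> \<le> exp (-(s * \<mu>)) * measure_pmf.expectation M (\<lambda>z. s * Y z + (exp (s * Y z) + exp (- (s * Y z))) - 1)"
  proof (intro mult_left_mono integral_mono)
    show "exp t \<le> t + (exp t + exp (-t)) - 1" for t :: real
      using exp_ge_add_one_self[of "-t"] by simp
  qed simp_all
  also have "measure_pmf.expectation M (\<lambda>z. s * Y z + (exp (s * Y z) + exp (- (s * Y z))) - 1)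
      = s * \<mu> + 2 * m - 1"
  proof -
    have "measure_pmf.expectation M (\<lambda>z. exp (s * Y z) + exp (- (s * Y z)))
        = measure_pmf.expectation M (\<lambda>z. exp (s * C (fst z)) * exp (- s * C (snd z)))
          + measure_pmf.expectation M (\<lambda>z. exp (- s * C (fst z)) * exp (s * C (snd z)))"
      by (simp add: cosh_Y)
    also have "\<dots> = 2 * m"
      unfolding M_def m_def
      using expectation_pair_pmf_mult[OF fin fin, of "\<lambda>x. exp (s * C x)" "\<lambda>x. exp (- s * C x)"]
        expectation_pair_pmf_mult[OF fin fin, of "\<lambda>x. exp (- s * C x)" "\<lambda>x. exp (s * C x)"]
      by simp
    finally show ?thesis
      by (simp add: \<mu>_def)
  qed
  also have "exp (-(s * \<mu>)) * (s * \<mu> + 2 * m - 1) \<le> exp (2 * u)"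
    using s0 \<mu>0 u0 m by (intro exp_neg_mult_le_exp_double) simp_all
  also have "\<dots> = exp (s^2 * (2 * c) / 2)"
    by (simp add: u_def)
  finally show "measure_pmf.expectation M (\<lambda>z. exp (s * (Y z - \<mu>))) \<le> exp (s^2 * (2 * c) / 2)" .
qed

lemma sub_gaussian_centered_map_pmf_divide:
  fixes M :: "'a pmf" and Y :: "'a \<Rightarrow> real" and Z :: "'b \<Rightarrow> real"
  assumes sg: "sub_gaussian M (\<lambda>w. Y w - measure_pmf.expectation M Y) c \<delta>"
    and K: "0 < K"
    and Z: "\<And>w. Z (g w) = Y w / K"
  shows "sub_gaussian (map_pmf g M) (\<lambda>q. Z q - measure_pmf.expectation (map_pmf g M) Z) (c / K^2) (K * \<delta>)"
  unfolding sub_gaussian_def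
proof (intro allI impI, elim conjE)
  fix l :: real
  assume l0: "0 \<le> l" and l\<delta>: "l \<le> K * \<delta>"
  define \<mu> where "\<mu> = measure_pmf.expectation M Y"
  have EZ: "measure_pmf.expectation (map_pmf g M) Z = \<mu> / K"
    by (simp add: Z \<mu>_def)
  have "(\<lambda>w. exp (l * (Z (g w) - \<mu> / K))) = (\<lambda>w. exp (l / K * (Y w - \<mu>)))"
    using K by (simp add: fun_eq_iff Z field_simps)
  then have "measure_pmf.expectation (map_pmf g M) (\<lambda>q. exp (l * (Z q - \<mu> / K)))
      = measure_pmf.expectation M (\<lambda>w. exp (l / K * (Y w - \<mu>)))"
    by simp
  also have "\<dots> \<le> exp ((l / K)^2 * c / 2)"
  proof -
    have "0 \<le> l / K" "l / K \<le> \<delta>"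
      using l0 l\<delta> K by (auto simp: field_simps)
    then show ?thesis
      using sg unfolding sub_gaussian_def \<mu>_def by blast
  qed
  also have "\<dots> = exp (l^2 * (c / K^2) / 2)"
    by (simp add: power_divide)
  finally show "measure_pmf.expectation (map_pmf g M) (\<lambda>q. exp (l * (Z q - measure_pmf.expectation (map_pmf g M) Z)))
      \<le> exp (l^2 * (c / K^2) / 2)"
    unfolding EZ .
qed

section \<open>Sampling from a frequency state\<close>

lemma valid_freq_bounds:
  assumes "valid_freq n r p" "i < n" "j < r"
  shows "0 \<le> p i j" "p i j \<le> 1"
proof -
  show "0 \<le> p i j"
    using assms by (simp add: valid_freq_def)
  have "p i j \<le> (\<Sum>k<r. p i k)"
    using assms by (intro member_le_sum) (auto simp: valid_freq_def)
  then show "p i j \<le> 1"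
    using assms by (simp add: valid_freq_def)
qed

lemma valid_freq_potential_nonneg:
  assumes "valid_freq n r p" "1 \<le> r"
  shows "0 \<le> (\<Sum>i<n. 1 - p i (r - 1))"
  using valid_freq_bounds[OF assms(1) _, of _ "r - 1"] assms(2) by (auto intro!: sum_nonneg)

definition row_pmf :: "nat \<Rightarrow> (nat \<Rightarrow> nat \<Rightarrow> real) \<Rightarrow> nat \<Rightarrow> nat pmf" where
  "row_pmf r p i = embed_pmf (\<lambda>j. if j < r then p i j else 0)"

lemma sample_eq_Pi_pmf_row_pmf: "sample n r p = Pi_pmf {..<n} 0 (row_pmf r p)"
  unfolding sample_def row_pmf_def by simp

lemma pmf_row_pmf:
  assumes "valid_freq n r p" "i < n"
  shows "pmf (row_pmf r p i) j = (if j < r then p i j else 0)"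
  unfolding row_pmf_def
proof (rule pmf_embed_pmf)
  show "0 \<le> (if j < r then p i j else 0)" for j
    using assms by (simp add: valid_freq_def)
  have "(\<integral>\<^sup>+ j. ennreal (if j < r then p i j else 0) \<partial>count_space UNIV) = (\<Sum>j<r. ennreal (p i j))"
    by (subst nn_integral_count_space'[of "{..<r}"]) auto
  also have "\<dots> = ennreal (\<Sum>j<r. p i j)"
    using assms by (intro sum_ennreal) (simp add: valid_freq_def)
  finally show "(\<integral>\<^sup>+ j. ennreal (if j < r then p i j else 0) \<partial>count_space UNIV) = 1"
    using assms by (simp add: valid_freq_def)
qed

lemma set_pmf_row_pmf:
  assumes "valid_freq n r p" "i < n"
  shows "set_pmf (row_pmf r p i) \<subseteq> {..<r}"
  using pmf_row_pmf[OF assms] by (auto simp: set_pmf_eq)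

lemma set_pmf_sample:
  assumes "valid_freq n r p"
  shows "set_pmf (sample n r p) \<subseteq> PiE_dflt {..<n} 0 (\<lambda>_. {..<r})"
  using set_pmf_row_pmf[OF assms]
  by (auto simp: sample_eq_Pi_pmf_row_pmf set_Pi_pmf PiE_dflt_def)

lemma finite_set_pmf_sample:
  assumes "valid_freq n r p"
  shows "finite (set_pmf (sample n r p))"
  using set_pmf_sample[OF assms] by (rule finite_subset) auto

lemma expectation_sample_coordinate:
  fixes h :: "nat \<Rightarrow> real"
  assumes "i < n"
  shows "measure_pmf.expectation (sample n r p) (\<lambda>x. h (x i)) = measure_pmf.expectation (row_pmf r p i) h"
proof -
  have "row_pmf r p i = map_pmf (\<lambda>x. x i) (sample n r p)"
    using assms by (simp add: sample_eq_Pi_pmf_row_pmf Pi_pmf_component)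
  then show ?thesis
    by simp
qed

definition top_ind :: "nat \<Rightarrow> nat \<Rightarrow> real" where
  "top_ind r v = (if v = r - 1 then 1 else 0)"

lemma expectation_row_pmf_top_ind:
  fixes h :: "real \<Rightarrow> real"
  assumes "valid_freq n r p" "i < n" "1 \<le> r"
  shows "measure_pmf.expectation (row_pmf r p i) (\<lambda>v. h (top_ind r v))
           = p i (r - 1) * h 1 + (1 - p i (r - 1)) * h 0"
proof -
  have "measure_pmf.expectation (row_pmf r p i) (\<lambda>v. h (top_ind r v)) = (\<Sum>j<r. h (top_ind r j) * p i j)"
  proof (subst integral_measure_pmf_real[of "{..<r}"])
    show "\<And>a. a \<in> set_pmf (row_pmf r p i) \<Longrightarrow> h (top_ind r a) \<noteq> 0 \<Longrightarrow> a \<in> {..<r}"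
      using set_pmf_row_pmf[OF assms(1,2)] by blast
  qed (simp_all add: pmf_row_pmf[OF assms(1,2)])
  also have "\<dots> = (\<Sum>j<r. h 0 * p i j + (if j = r - 1 then (h 1 - h 0) * p i j else 0))"
    by (intro sum.cong) (simp_all add: top_ind_def algebra_simps)
  also have "\<dots> = h 0 * (\<Sum>j<r. p i j) + (h 1 - h 0) * p i (r - 1)"
    using assms(3) by (simp add: sum.distrib sum_distrib_left[symmetric])
  also have "\<dots> = p i (r - 1) * h 1 + (1 - p i (r - 1)) * h 0"
    using assms(1,2) by (simp add: valid_freq_def algebra_simps)
  finally show ?thesis .
qed

lemma rOneMax_eq_sum_top_ind: "rOneMax r n x = (\<Sum>k<n. top_ind r (x k))"
proof -
  have "rOneMax r n x = (\<Sum>k\<in>{k\<in>{..<n}. x k = r - 1}. 1)"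
    by (simp add: rOneMax_def)
  also have "\<dots> = (\<Sum>k<n. top_ind r (x k))"
    by (subst sum.inter_filter) (auto simp: top_ind_def)
  finally show ?thesis .
qed

lemma rOneMax_GOneMax_separable:
  assumes "f = rOneMax r n \<or> f = GOneMax n"
  obtains g :: "nat \<Rightarrow> real" where "f = (\<lambda>z. \<Sum>k<n. g (z k))" "\<And>v. v < r \<Longrightarrow> g v \<le> g (r - 1)"
  using assms
proof
  assume "f = rOneMax r n"
  then have "f = (\<lambda>z. \<Sum>k<n. top_ind r (z k))"
    by (simp add: fun_eq_iff rOneMax_eq_sum_top_ind)
  moreover have "top_ind r v \<le> top_ind r (r - 1)" for v
    by (simp add: top_ind_def)
  ultimately show thesis
    using that by blast
next
  assume "f = GOneMax n"
  then have "f = (\<lambda>z. \<Sum>k<n. real (z k))"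
    by (simp add: fun_eq_iff GOneMax_def)
  then show thesis
    using that by force
qed

lemma expectation_exp_rOneMax:
  assumes "valid_freq n r p" "1 \<le> r"
  shows "measure_pmf.expectation (sample n r p) (\<lambda>x. exp (t * rOneMax r n x))
           = (\<Prod>k<n. p k (r - 1) * exp t + (1 - p k (r - 1)))"
proof -
  have "measure_pmf.expectation (sample n r p) (\<lambda>x. exp (t * rOneMax r n x))
      = measure_pmf.expectation (Pi_pmf {..<n} 0 (row_pmf r p)) (\<lambda>x. \<Prod>k<n. exp (t * top_ind r (x k)))"
    by (simp add: rOneMax_eq_sum_top_ind sum_distrib_left exp_sum sample_eq_Pi_pmf_row_pmf)
  also have "\<dots> = (\<Prod>k<n. measure_pmf.expectation (row_pmf r p k) (\<lambda>v. exp (t * top_ind r v)))"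
    using finite_subset[OF set_pmf_row_pmf[OF assms(1)]]
    by (intro expectation_prod_Pi_pmf integrable_measure_pmf_finite) auto
  also have "\<dots> = (\<Prod>k<n. p k (r - 1) * exp t + (1 - p k (r - 1)))"
    using expectation_row_pmf_top_ind[OF assms(1) _ assms(2), of _ "\<lambda>a. exp (t * a)"]
    by (intro prod.cong refl) simp
  finally show ?thesis .
qed

lemma rOneMax_mgf_product_le:
  assumes "valid_freq n r p" "1 \<le> r" "0 \<le> s" "s \<le> 1"
  shows "measure_pmf.expectation (sample n r p) (\<lambda>x. exp (s * rOneMax r n x))
           * measure_pmf.expectation (sample n r p) (\<lambda>x. exp (- s * rOneMax r n x))
         \<le> exp (2 * s^2 * (\<Sum>k<n. 1 - p k (r - 1)))"
proof -
  have X: "0 \<le> p k (r - 1)" "p k (r - 1) \<le> 1" if "k < n" for k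
    using valid_freq_bounds[OF assms(1) that, of "r - 1"] assms(2) by auto
  have "measure_pmf.expectation (sample n r p) (\<lambda>x. exp (s * rOneMax r n x))
          * measure_pmf.expectation (sample n r p) (\<lambda>x. exp (- s * rOneMax r n x))
      = (\<Prod>k<n. (p k (r - 1) * exp s + (1 - p k (r - 1))) * (p k (r - 1) * exp (-s) + (1 - p k (r - 1))))"
    using expectation_exp_rOneMax[OF assms(1,2), of s] expectation_exp_rOneMax[OF assms(1,2), of "- s"]
    by (simp add: prod.distrib)
  also have "\<dots> \<le> (\<Prod>k<n. exp (2 * s^2 * (1 - p k (r - 1))))"
    using X assms(3,4) by (intro prod_mono conjI bernoulli_mgf_product_le) auto
  also have "\<dots> = exp (2 * s^2 * (\<Sum>k<n. 1 - p k (r - 1)))"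
    by (simp add: exp_sum sum_distrib_left)
  finally show ?thesis .
qed

section \<open>One step of the cGA\<close>

definition cga_winner :: "((nat \<Rightarrow> nat) \<Rightarrow> real) \<Rightarrow> (nat \<Rightarrow> nat) \<Rightarrow> (nat \<Rightarrow> nat) \<Rightarrow> nat \<Rightarrow> nat" where
  "cga_winner f x y = (if f x < f y then y else x)"

definition cga_loser :: "((nat \<Rightarrow> nat) \<Rightarrow> real) \<Rightarrow> (nat \<Rightarrow> nat) \<Rightarrow> (nat \<Rightarrow> nat) \<Rightarrow> nat \<Rightarrow> nat" where
  "cga_loser f x y = (if f x < f y then x else y)"

lemma cga_step_eq_map_pmf:
  "cga_step n r K f p =
     map_pmf (\<lambda>(x, y). cga_update K p (cga_winner f x y) (cga_loser f x y))
       (pair_pmf (sample n r p) (sample n r p))"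
proof -
  have "(\<lambda>(x, y). cga_update K p (cga_winner f x y) (cga_loser f x y))
      = (\<lambda>(x, y). if f x < f y then cga_update K p y x else cga_update K p x y)"
    by (simp add: fun_eq_iff cga_winner_def cga_loser_def)
  then show ?thesis
    by (simp add: cga_step_def pair_pmf_def map_bind_pmf)
qed

lemma cga_update_top_increment:
  "cga_update K p x y i (r - 1) - p i (r - 1) = (top_ind r (x i) - top_ind r (y i)) / K"
  by (simp add: cga_update_def top_ind_def diff_divide_distrib)

definition cga_top_gain :: "((nat \<Rightarrow> nat) \<Rightarrow> real) \<Rightarrow> nat \<Rightarrow> nat \<Rightarrow> (nat \<Rightarrow> nat) \<Rightarrow> (nat \<Rightarrow> nat) \<Rightarrow> real" where
  "cga_top_gain f r i x y = top_ind r (cga_winner f x y i) - top_ind r (cga_loser f x y i)"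

lemma cga_top_gain_trinary: "cga_top_gain f r i x y \<in> {-1, 0, 1}"
  by (simp add: cga_top_gain_def top_ind_def)

lemma sum_fun_upd_eq:
  fixes g :: "'b \<Rightarrow> 'c :: ab_group_add"
  assumes "finite A" "i \<in> A"
  shows "(\<Sum>k\<in>A. g ((x(i := b)) k)) = (\<Sum>k\<in>A. g (x k)) - g (x i) + g b"
proof -
  have "(\<Sum>k\<in>A - {i}. g ((x(i := b)) k)) = (\<Sum>k\<in>A - {i}. g (x k))"
    by (intro sum.cong) auto
  then show ?thesis
    using assms by (simp add: sum.remove algebra_simps)
qed

lemma cga_top_gain_swap_nonneg:
  assumes "i < n" "x i < r" "y i < r"
    and f: "f = (\<lambda>z. \<Sum>k<n. g (z k))"
    and g_top: "\<And>v. v < r \<Longrightarrow> g v \<le> g (r - 1)"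
  shows "0 \<le> cga_top_gain f r i x y + cga_top_gain f r i (x(i := y i)) (y(i := x i))"
proof -
  have upd: "f (z(i := b)) = f z - g (z i) + g b" for z b
    unfolding f using assms(1) by (simp only: sum_fun_upd_eq finite_lessThan lessThan_iff)
  show ?thesis
    using g_top[OF assms(2)] g_top[OF assms(3)] upd[of x "y i"] upd[of y "x i"]
    by (cases "x i = r - 1"; cases "y i = r - 1")
      (auto simp: cga_top_gain_def cga_winner_def cga_loser_def top_ind_def)
qed

lemma expectation_cga_top_gain_nonneg:
  assumes "valid_freq n r p" "i < n"
    and f: "f = (\<lambda>z. \<Sum>k<n. g (z k))"
    and g_top: "\<And>v. v < r \<Longrightarrow> g v \<le> g (r - 1)"
  shows "0 \<le> measure_pmf.expectation (pair_pmf (sample n r p) (sample n r p)) (\<lambda>(x, y). cga_top_gain f r i x y)"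
proof -
  define M where "M = pair_pmf (sample n r p) (sample n r p)"
  define sw where "sw = (\<lambda>(x, y). (x(i := y i), y(i := x i) :: nat \<Rightarrow> nat))"
  define D where "D = (\<lambda>(x, y). cga_top_gain f r i x y)"
  have int [simp]: "integrable (measure_pmf M) h" for h :: "_ \<Rightarrow> real"
    using finite_set_pmf_sample[OF assms(1)] by (intro integrable_measure_pmf_finite) (simp add: M_def)
  have "map_pmf sw M = M"
    unfolding M_def sw_def sample_eq_Pi_pmf_row_pmf
    using assms(2) by (intro map_pmf_swap_coordinate_pair_Pi_pmf) auto
  then have "measure_pmf.expectation M D = measure_pmf.expectation M (\<lambda>z. D (sw z))"
    by (metis integral_map_pmf)
  then have "2 * measure_pmf.expectation M D = measure_pmf.expectation M (\<lambda>z. D z + D (sw z))"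
    by simp
  also have "\<dots> \<ge> 0"
  proof (intro integral_nonneg_AE AE_pmfI)
    fix z assume "z \<in> set_pmf M"
    then have "fst z i < r" "snd z i < r"
      using set_pmf_sample[OF assms(1)] assms(2) by (auto simp: M_def PiE_dflt_def)
    then show "0 \<le> D z + D (sw z)"
      using cga_top_gain_swap_nonneg[OF assms(2) _ _ f g_top]
      by (auto simp: D_def sw_def split: prod.splits)
  qed
  finally show ?thesis
    by (simp add: M_def D_def)
qed

lemma expectation_cga_top_gain_sq:
  assumes "valid_freq n r p" "i < n" "1 \<le> r"
  shows "measure_pmf.expectation (pair_pmf (sample n r p) (sample n r p)) (\<lambda>(x, y). (cga_top_gain f r i x y)^2)
           = 2 * p i (r - 1) * (1 - p i (r - 1))"
proof -
  define S where "S = sample n r p"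
  define a where "a = (\<lambda>x :: nat \<Rightarrow> nat. top_ind r (x i))"
  have fin: "finite (set_pmf S)"
    unfolding S_def by (rule finite_set_pmf_sample[OF assms(1)])
  have int [simp]: "integrable (measure_pmf (pair_pmf S S)) h" for h :: "_ \<Rightarrow> real"
    using fin by (intro integrable_measure_pmf_finite) simp
  have Ea: "measure_pmf.expectation S a = p i (r - 1)"
    using expectation_sample_coordinate[OF assms(2), where h = "top_ind r" and r = r and p = p]
      expectation_row_pmf_top_ind[OF assms, of "\<lambda>t. t"]
    by (simp add: S_def a_def)
  have "(cga_top_gain f r i x y)^2 = a x + a y - 2 * (a x * a y)" for x y
    by (simp add: cga_top_gain_def cga_winner_def cga_loser_def top_ind_def a_def)
  then have "measure_pmf.expectation (pair_pmf S S) (\<lambda>(x, y). (cga_top_gain f r i x y)^2)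
      = measure_pmf.expectation (pair_pmf S S) (\<lambda>z. a (fst z)) + measure_pmf.expectation (pair_pmf S S) (\<lambda>z. a (snd z))
        - 2 * measure_pmf.expectation (pair_pmf S S) (\<lambda>z. a (fst z) * a (snd z))"
    by (simp add: case_prod_unfold)
  also have "\<dots> = 2 * p i (r - 1) * (1 - p i (r - 1))"
    using Ea expectation_pair_pmf_mult[OF fin fin, of a a] by (simp add: algebra_simps)
  finally show ?thesis
    by (simp add: S_def)
qed

lemma cga_top_frequency_sub_gaussian:
  fixes n r i :: nat and K :: real and f :: "(nat \<Rightarrow> nat) \<Rightarrow> real"
    and p :: "nat \<Rightarrow> nat \<Rightarrow> real" and g :: "nat \<Rightarrow> real"
  defines "X \<equiv> p i (r - 1)"
    and "\<epsilon> \<equiv> measure_pmf.expectation (cga_step n r K f p) (\<lambda>q. q i (r - 1) - p i (r - 1))"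
  assumes valid: "valid_freq n r p" and i: "i < n" and r: "1 \<le> r" and K: "0 < K"
    and f: "f = (\<lambda>z. \<Sum>k<n. g (z k))"
    and g_top: "\<And>v. v < r \<Longrightarrow> g v \<le> g (r - 1)"
  shows "sub_gaussian (cga_step n r K f p) (\<lambda>q. q i (r - 1) - X - \<epsilon>) (4 * X * (1 - X) / K^2 + 2 * \<epsilon> / K) K"
proof -
  define M where "M = pair_pmf (sample n r p) (sample n r p)"
  define W where "W = (\<lambda>(x, y). cga_update K p (cga_winner f x y) (cga_loser f x y))"
  define D where "D = (\<lambda>(x, y). cga_top_gain f r i x y)"
  have step: "cga_step n r K f p = map_pmf W M"
    by (simp add: cga_step_eq_map_pmf W_def M_def)
  have fin: "finite (set_pmf M)"
    using finite_set_pmf_sample[OF valid] by (simp add: M_def)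
  have inc: "W z i (r - 1) - X = D z / K" for z
    by (cases z) (simp only: W_def D_def X_def case_prod_conv cga_update_top_increment cga_top_gain_def)
  have \<epsilon>: "\<epsilon> = measure_pmf.expectation M D / K"
    unfolding \<epsilon>_def step integral_map_pmf X_def[symmetric] inc by simp
  have drift: "0 \<le> measure_pmf.expectation M D"
    unfolding M_def D_def by (rule expectation_cga_top_gain_nonneg[OF valid i f g_top])
  have sq: "measure_pmf.expectation M (\<lambda>z. (D z)^2) = 2 * X * (1 - X)"
    using expectation_cga_top_gain_sq[OF valid i r, of f]
    by (simp add: M_def D_def X_def case_prod_unfold)
  have "sub_gaussian M (\<lambda>z. D z - measure_pmf.expectation M D)
      (2 * (measure_pmf.expectation M (\<lambda>z. (D z)^2) + measure_pmf.expectation M D)) 1"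
    using fin drift cga_top_gain_trinary
    by (intro sub_gaussian_centered_trinary) (auto simp: D_def split: prod.splits)
  then have sg: "sub_gaussian (map_pmf W M)
      (\<lambda>q. q i (r - 1) - X - measure_pmf.expectation (map_pmf W M) (\<lambda>q. q i (r - 1) - X))
      (2 * (2 * X * (1 - X) + measure_pmf.expectation M D) / K^2) (K * 1)"
    unfolding sq using K inc by (rule sub_gaussian_centered_map_pmf_divide[where Z = "\<lambda>q. q i (r - 1) - X"])
  have \<epsilon>_map: "measure_pmf.expectation (map_pmf W M) (\<lambda>q. q i (r - 1) - X) = \<epsilon>"
    unfolding \<epsilon>_def step X_def ..
  have c: "2 * (2 * X * (1 - X) + measure_pmf.expectation M D) / K^2 = 4 * X * (1 - X) / K^2 + 2 * \<epsilon> / K"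
    using K by (simp add: \<epsilon> field_simps power2_eq_square)
  show ?thesis
    using sg unfolding step \<epsilon>_map c mult_1_right .
qed

lemma cga_potential_sub_gaussian:
  fixes n r :: nat and K :: real and f :: "(nat \<Rightarrow> nat) \<Rightarrow> real" and p :: "nat \<Rightarrow> nat \<Rightarrow> real"
  defines "\<phi> \<equiv> \<lambda>q :: nat \<Rightarrow> nat \<Rightarrow> real. \<Sum>i<n. 1 - q i (r - 1)"
    and "\<epsilon> \<equiv> measure_pmf.expectation (cga_step n r K f p)
                (\<lambda>q. (\<Sum>i<n. 1 - p i (r - 1)) - (\<Sum>i<n. 1 - q i (r - 1)))"
  assumes valid: "valid_freq n r p" and r: "1 \<le> r" and K: "0 < K" and drift: "0 \<le> \<epsilon>"
  shows "sub_gaussian (cga_step n r K f p) (\<lambda>q. \<phi> p - \<phi> q - \<epsilon>) (8 * \<phi> p / K^2) K"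
proof -
  define M where "M = pair_pmf (sample n r p) (sample n r p)"
  define W where "W = (\<lambda>(x, y). cga_update K p (cga_winner f x y) (cga_loser f x y))"
  define Y where "Y = (\<lambda>(x, y). rOneMax r n (cga_winner f x y) - rOneMax r n (cga_loser f x y))"
  have step: "cga_step n r K f p = map_pmf W M"
    by (simp add: cga_step_eq_map_pmf W_def M_def)
  have fin: "finite (set_pmf (sample n r p))"
    by (rule finite_set_pmf_sample[OF valid])
  have inc: "\<phi> p - \<phi> (W z) = Y z / K" for z
  proof (cases z)
    case (Pair x y)
    have "\<phi> p - \<phi> (W z) = (\<Sum>k<n. W z k (r - 1) - p k (r - 1))"
      by (simp add: \<phi>_def sum_subtractf)
    also have "\<dots> = (\<Sum>k<n. (top_ind r (cga_winner f x y k) - top_ind r (cga_loser f x y k)) / K)"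
      unfolding Pair W_def case_prod_conv cga_update_top_increment ..
    also have "\<dots> = Y z / K"
      by (simp add: Pair Y_def rOneMax_eq_sum_top_ind sum_subtractf flip: sum_divide_distrib)
    finally show ?thesis .
  qed
  have \<epsilon>_map: "measure_pmf.expectation (map_pmf W M) (\<lambda>q. \<phi> p - \<phi> q) = \<epsilon>"
    unfolding \<epsilon>_def \<phi>_def step ..
  have "0 \<le> measure_pmf.expectation M Y / K"
    using drift unfolding \<epsilon>_map[symmetric] integral_map_pmf inc by simp
  then have drift_Y: "0 \<le> measure_pmf.expectation M Y"
    using K by (simp add: zero_le_divide_iff)
  have signed: "Y (x, y) = rOneMax r n y - rOneMax r n x \<or> Y (x, y) = rOneMax r n x - rOneMax r n y" for x y
    by (simp add: Y_def cga_winner_def cga_loser_def)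
  have mgf: "measure_pmf.expectation (sample n r p) (\<lambda>x. exp (s * rOneMax r n x))
        * measure_pmf.expectation (sample n r p) (\<lambda>x. exp (- s * rOneMax r n x))
      \<le> exp (s^2 * (4 * \<phi> p) / 2)" if "0 \<le> s" "s \<le> 1" for s
    using rOneMax_mgf_product_le[OF valid r that] by (simp add: \<phi>_def mult.assoc)
  have c: "0 \<le> 4 * \<phi> p"
    using valid_freq_potential_nonneg[OF valid r] by (simp add: \<phi>_def)
  have "sub_gaussian M (\<lambda>z. Y z - measure_pmf.expectation M Y) (2 * (4 * \<phi> p)) 1"
    using drift_Y unfolding M_def by (rule sub_gaussian_centered_signed_difference[OF fin signed _ c mgf])
  then have "sub_gaussian (map_pmf W M)
      (\<lambda>q. \<phi> p - \<phi> q - measure_pmf.expectation (map_pmf W M) (\<lambda>q. \<phi> p - \<phi> q))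
      (2 * (4 * \<phi> p) / K^2) (K * 1)"
    using K inc by (rule sub_gaussian_centered_map_pmf_divide[where Z = "\<lambda>q. \<phi> p - \<phi> q"])
  then show ?thesis
    unfolding step \<epsilon>_map by simp
qed

theorem lemma7:
  fixes n r :: nat and K :: real and f :: "(nat \<Rightarrow> nat) \<Rightarrow> real"
    and p :: "nat \<Rightarrow> nat \<Rightarrow> real"
  assumes "n \<ge> 1" and "r \<ge> 2" and "K > 0"
    and "f = rOneMax r n \<or> f = GOneMax n"
    and "cga_reachable n r K f p" and "valid_freq n r p"
  shows "(\<forall>i<n.
            let X = p i (r - 1);
                \<epsilon> = measure_pmf.expectation (cga_step n r K f p) (\<lambda>q. q i (r - 1) - X)
            in sub_gaussian (cga_step n r K f p) (\<lambda>q. q i (r - 1) - X - \<epsilon>)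
                 (4 * X * (1 - X) / K^2 + 2 * \<epsilon> / K) K)
       \<and> (let \<phi> = (\<lambda>q. \<Sum>i<n. 1 - q i (r - 1));
              \<epsilon> = measure_pmf.expectation (cga_step n r K f p) (\<lambda>q. \<phi> p - \<phi> q)
          in \<epsilon> \<ge> sqrt (\<phi> p) / (30 * K) \<longrightarrow>
             sub_gaussian (cga_step n r K f p) (\<lambda>q. \<phi> p - \<phi> q - \<epsilon>) (8 * \<phi> p / K^2) K)"
proof -
  obtain g where f: "f = (\<lambda>z. \<Sum>k<n. g (z k))" and g_top: "\<And>v. v < r \<Longrightarrow> g v \<le> g (r - 1)"
    using rOneMax_GOneMax_separable[OF assms(4)] by blast
  have r: "1 \<le> r"
    using assms(2) by simp
  have "0 \<le> sqrt (\<Sum>i<n. 1 - p i (r - 1)) / (30 * K)"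
    using valid_freq_potential_nonneg[OF assms(6) r] assms(3) by simp
  then show ?thesis
    unfolding Let_def
    using cga_top_frequency_sub_gaussian[OF assms(6) _ r assms(3) f g_top]
      cga_potential_sub_gaussian[OF assms(6) r assms(3)]
    by (meson order_trans)
qed

end
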